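(* For all integers $n,m\ge 2$, \[ \min\{n,m\}+2\le \gamma_{2t}(K_n\Box K_m)\le 2\min\{n,m\}. \]
   Context: All graphs are finite, simple and undirected. For a graph $G=(V,E)$, a set $S\subseteq V$ is a total $2$-dominating set if every vertex of $V$ (including those in $S$) is adjacent to at least $2$ vertices of $S$. The total $2$-domination number $\gamma_{2t}(G)$ is the minimum cardinality of a total $2$-dominating set of $G$. The Cartesian product $G\Box H$ has vertex set $V(G)\times V(H)$, with $(u_1,v_1)\sim(u_2,v_2)$ iff either $u_1=u_2$ and $v_1\sim v_2$ in $H$, or $v_1=v_2$ and $u_1\sim u_2$ in $G$. $K_n$ is the complete graph on $n$ vertices. *)

theory Defs
  imports Main
begin

text \<open>A finite simple graph is represented by a vertex set V and a symmetric,
irreflexive adjacency relation E (only its restriction to V matters).\<close>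

definition total_k_dominating :: "nat \<Rightarrow> 'a set \<Rightarrow> ('a \<Rightarrow> 'a \<Rightarrow> bool) \<Rightarrow> 'a set \<Rightarrow> bool" where
  "total_k_dominating k V E S \<longleftrightarrow>
     S \<subseteq> V \<and> (\<forall>v\<in>V. card {u\<in>S. E v u} \<ge> k)"

definition total_2_dom_number :: "'a set \<Rightarrow> ('a \<Rightarrow> 'a \<Rightarrow> bool) \<Rightarrow> nat" where
  "total_2_dom_number V E = (LEAST c. \<exists>S. total_k_dominating 2 V E S \<and> card S = c)"

definition complete_graph :: "nat \<Rightarrow> nat set \<times> (nat \<Rightarrow> nat \<Rightarrow> bool)" where
  "complete_graph n = ({0..<n}, \<lambda>u v. u \<noteq> v)"

definition cart_prod :: "'a set \<times> ('a \<Rightarrow> 'a \<Rightarrow> bool) \<Rightarrow> 'b set \<times> ('b \<Rightarrow> 'b \<Rightarrow> bool)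
    \<Rightarrow> ('a \<times> 'b) set \<times> ('a \<times> 'b \<Rightarrow> 'a \<times> 'b \<Rightarrow> bool)" where
  "cart_prod G H = (fst G \<times> fst H,
     \<lambda>(u1, v1) (u2, v2). (u1 = u2 \<and> snd H v1 v2) \<or> (v1 = v2 \<and> snd G u1 u2))"

definition gamma_2t :: "'a set \<times> ('a \<Rightarrow> 'a \<Rightarrow> bool) \<Rightarrow> nat" where
  "gamma_2t G = total_2_dom_number (fst G) (snd G)"

end

theory Submission
  imports Defs
begin

text \<open>Upper bound: two full rows (or columns) of the grid form a total 2-dominating set.
Lower bound: if some row and some column both miss the dominating set S, their common vertex
has no neighbour in S; so up to swapping the factors every row meets S. If every row carries two
elements of S then the bound is immediate. Otherwise some row carries a single element (a, b):
its other neighbours all lie in column b, which therefore carries at least three elements, and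
every other column carries one, since the vertex where it meets row a sees only (a, b) in that row.\<close>

definition rook_adj :: "'a \<times> 'b \<Rightarrow> 'a \<times> 'b \<Rightarrow> bool" where
  "rook_adj = (\<lambda>(a, b) (a', b'). (a = a' \<and> b \<noteq> b') \<or> (b = b' \<and> a \<noteq> a'))"

lemma rook_adj_simp [simp]:
  "rook_adj (a, b) (a', b') \<longleftrightarrow> (a = a' \<and> b \<noteq> b') \<or> (b = b' \<and> a \<noteq> a')"
  by (simp add: rook_adj_def)

lemma cart_prod_complete_graph:
  "cart_prod (complete_graph n) (complete_graph m) = ({0..<n} \<times> {0..<m}, rook_adj)"
  by (simp add: cart_prod_def complete_graph_def rook_adj_def)

lemma total_k_dominating_mono:
  "total_k_dominating k V E S \<Longrightarrow> j \<le> k \<Longrightarrow> total_k_dominating j V E S"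
  unfolding total_k_dominating_def by (meson order_trans)

lemma total_2_dom_number_le:
  "total_k_dominating 2 V E S \<Longrightarrow> total_2_dom_number V E \<le> card S"
  unfolding total_2_dom_number_def by (rule Least_le) blast

lemma total_2_dom_number_attained:
  assumes "total_k_dominating 2 V E S"
  obtains S' where "total_k_dominating 2 V E S'" "card S' = total_2_dom_number V E"
  using LeastI_ex[of "\<lambda>c. \<exists>S. total_k_dominating 2 V E S \<and> card S = c"] assms
  unfolding total_2_dom_number_def by blast

lemma total_k_dominating_rook_swap:
  assumes "total_k_dominating k (A \<times> B) rook_adj S"
  shows "total_k_dominating k (B \<times> A) rook_adj (prod.swap ` S)"
  unfolding total_k_dominating_def
proof (intro conjI ballI)
  show "prod.swap ` S \<subseteq> B \<times> A"
    using assms by (auto simp: total_k_dominating_def)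
next
  fix v assume "v \<in> B \<times> A"
  then have "k \<le> card {u \<in> S. rook_adj (prod.swap v) u}"
    using assms by (auto simp: total_k_dominating_def)
  also have "{u \<in> S. rook_adj (prod.swap v) u} = prod.swap ` {u \<in> prod.swap ` S. rook_adj v u}"
    by (cases v) (force simp: image_iff)
  also have "card \<dots> = card {u \<in> prod.swap ` S. rook_adj v u}"
    by (simp add: card_image)
  finally show "k \<le> card {u \<in> prod.swap ` S. rook_adj v u}" .
qed

lemma card_eq_sum_card_fibres:
  assumes "finite S" "finite C" "f ` S \<subseteq> C"
  shows "card S = (\<Sum>c\<in>C. card {x \<in> S. f x = c})"
  using sum.group[OF assms, of "\<lambda>_. 1 :: nat"] by simp

lemma card_rook_neighbours:
  assumes "finite S"
  shows "card {u \<in> S. rook_adj (a, b) u} + (if (a, b) \<in> S then 2 else 0)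
           = card {x \<in> S. fst x = a} + card {x \<in> S. snd x = b}"
proof -
  let ?R = "{x \<in> S. fst x = a}" and ?C = "{x \<in> S. snd x = b}"
  have nbrs: "{u \<in> S. rook_adj (a, b) u} = (?R \<union> ?C) - {(a, b)}"
    by auto
  have meet: "?R \<inter> ?C = S \<inter> {(a, b)}"
    by auto
  have "card (?R \<union> ?C) + card (S \<inter> {(a, b)}) = card ?R + card ?C"
    using card_Un_Int[of ?R ?C] assms meet by simp
  moreover have "card (?R \<union> ?C) > 0" if "(a, b) \<in> S"
    using that assms by (auto simp: card_gt_0_iff)
  ultimately show ?thesis
    unfolding nbrs using assms by (cases "(a, b) \<in> S") (auto simp: card_Diff_singleton)
qed

lemma card_ge_if_row_singleton:
  assumes "finite A" "finite B" "S \<subseteq> A \<times> B" "a \<in> A"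
    and dom: "\<forall>v\<in>A \<times> B. 2 \<le> card {u \<in> S. rook_adj v u}"
    and row: "{x \<in> S. fst x = a} = {(a, b)}"
  shows "card B + 2 \<le> card S"
proof -
  let ?col = "\<lambda>c. card {x \<in> S. snd x = c}"
  have fin: "finite S"
    using assms(1-3) finite_subset by blast
  have ab: "(a, b) \<in> S" "b \<in> B"
    using row assms(3) by auto
  have row_card: "card {x \<in> S. fst x = a} = 1"
    using row by simp
  have "2 \<le> card {u \<in> S. rook_adj (a, b) u}"
    using dom ab(2) assms(4) by blast
  then have col_b: "3 \<le> ?col b"
    using card_rook_neighbours[OF fin, of a b] ab(1) row_card by simp
  have col_other: "1 \<le> ?col c" if "c \<in> B - {b}" for c
  proof -
    have "2 \<le> card {u \<in> S. rook_adj (a, c) u}"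
      using dom that assms(4) by blast
    moreover have "(a, c) \<notin> S"
    proof
      assume "(a, c) \<in> S"
      then have "(a, c) \<in> {x \<in> S. fst x = a}"
        by simp
      with row that show False
        by simp
    qed
    ultimately show ?thesis
      using card_rook_neighbours[OF fin, of a c] row_card by simp
  qed
  have "snd ` S \<subseteq> B"
    using assms(3) by force
  then have "card S = ?col b + (\<Sum>c\<in>B - {b}. ?col c)"
    using card_eq_sum_card_fibres[OF fin assms(2)] sum.remove[OF assms(2) ab(2)] by simp
  moreover have "card B - 1 \<le> (\<Sum>c\<in>B - {b}. ?col c)"
    using sum_mono[of "B - {b}" "\<lambda>_. 1" ?col] col_other ab(2) assms(2) by simp
  moreover have "0 < card B"
    using ab(2) assms(2) by (auto simp: card_gt_0_iff)
  ultimately show ?thesis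
    using col_b by linarith
qed

lemma card_ge_if_rows_meet:
  assumes "finite A" "finite B" "2 \<le> card A" "S \<subseteq> A \<times> B"
    and dom: "\<forall>v\<in>A \<times> B. 2 \<le> card {u \<in> S. rook_adj v u}"
    and rows: "\<forall>a\<in>A. \<exists>b. (a, b) \<in> S"
  shows "min (card A) (card B) + 2 \<le> card S"
proof -
  have fin: "finite S"
    using assms(1,2,4) finite_subset by blast
  show ?thesis
  proof (cases "\<exists>a\<in>A. card {x \<in> S. fst x = a} \<le> 1")
    case True
    then obtain a where a: "a \<in> A" "card {x \<in> S. fst x = a} \<le> 1"
      by blast
    obtain b where "(a, b) \<in> S"
      using rows a(1) by blast
    then have "{x \<in> S. fst x = a} = {(a, b)}"
      using a(2) fin by (auto simp: card_le_Suc0_iff_eq)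
    then show ?thesis
      using card_ge_if_row_singleton[OF assms(1,2,4) a(1) dom] by simp
  next
    case False
    have "fst ` S \<subseteq> A"
      using assms(4) by force
    then have "card S = (\<Sum>a\<in>A. card {x \<in> S. fst x = a})"
      by (rule card_eq_sum_card_fibres[OF fin assms(1)])
    moreover have "(\<Sum>a\<in>A. 2) \<le> (\<Sum>a\<in>A. card {x \<in> S. fst x = a})"
      using False by (intro sum_mono) (auto simp: not_le Suc_le_eq)
    ultimately show ?thesis
      using assms(3) by simp
  qed
qed

lemma rook_rows_or_columns_meet:
  assumes "total_k_dominating 1 (A \<times> B) rook_adj S"
  shows "(\<forall>a\<in>A. \<exists>b. (a, b) \<in> S) \<or> (\<forall>b\<in>B. \<exists>a. (a, b) \<in> S)"
proof (rule ccontr)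
  assume "\<not> ?thesis"
  then obtain a b where a: "a \<in> A" "\<forall>b'. (a, b') \<notin> S" and b: "b \<in> B" "\<forall>a'. (a', b) \<notin> S"
    by blast
  have "1 \<le> card {u \<in> S. rook_adj (a, b) u}"
    using assms a(1) b(1) by (simp add: total_k_dominating_def)
  moreover have "{u \<in> S. rook_adj (a, b) u} = {}"
    using a(2) b(2) by (force simp: rook_adj_def)
  ultimately show False
    by simp
qed

lemma rook_total_2_dominating_card_ge:
  assumes "finite A" "finite B" "2 \<le> card A" "2 \<le> card B"
    and S: "total_k_dominating 2 (A \<times> B) rook_adj S"
  shows "min (card A) (card B) + 2 \<le> card S"
proof -
  have "total_k_dominating 1 (A \<times> B) rook_adj S"
    using S by (rule total_k_dominating_mono) simp
  then consider "\<forall>a\<in>A. \<exists>b. (a, b) \<in> S" | "\<forall>b\<in>B. \<exists>a. (a, b) \<in> S"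
    using rook_rows_or_columns_meet by blast
  then show ?thesis
  proof cases
    case 1
    then show ?thesis
      using card_ge_if_rows_meet[OF assms(1-3)] S by (auto simp: total_k_dominating_def)
  next
    case 2
    then have "\<forall>b\<in>B. \<exists>a. (b, a) \<in> prod.swap ` S"
      by force
    then have "min (card B) (card A) + 2 \<le> card (prod.swap ` S)"
      using card_ge_if_rows_meet[OF assms(2,1,4)] total_k_dominating_rook_swap[OF S]
      by (auto simp: total_k_dominating_def)
    then show ?thesis
      by (simp add: card_image min.commute)
  qed
qed

lemma rook_two_columns_total_2_dominating:
  assumes "2 \<le> card A" "b0 \<in> B" "b1 \<in> B" "b0 \<noteq> b1"
  shows "total_k_dominating 2 (A \<times> B) rook_adj (A \<times> {b0, b1})"
  unfolding total_k_dominating_def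
proof (intro conjI ballI)
  show "A \<times> {b0, b1} \<subseteq> A \<times> B"
    using assms by auto
next
  fix v assume "v \<in> A \<times> B"
  then obtain a b where v: "v = (a, b)" "a \<in> A" "b \<in> B"
    by blast
  have "\<not> A \<subseteq> {a}"
    using assms(1) card_mono[of "{a}" A] by auto
  then obtain a' where a': "a' \<in> A" "a' \<noteq> a"
    by blast
  have "\<exists>x y. x \<noteq> y \<and> {x, y} \<subseteq> {u \<in> A \<times> {b0, b1}. rook_adj (a, b) u}"
  proof (cases "b \<in> {b0, b1}")
    case True
    then obtain b' where "b' \<in> {b0, b1}" "b' \<noteq> b"
      using assms(4) by blast
    then show ?thesis
      using True v a' by (intro exI[of _ "(a, b')"] exI[of _ "(a', b)"]) auto
  next
    case False
    then show ?thesis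
      using v assms(4) by (intro exI[of _ "(a, b0)"] exI[of _ "(a, b1)"]) auto
  qed
  moreover have "finite {u \<in> A \<times> {b0, b1}. rook_adj (a, b) u}"
    using assms(1) by (simp add: card_ge_0_finite)
  ultimately show "2 \<le> card {u \<in> A \<times> {b0, b1}. rook_adj v u}"
    unfolding v(1) by (metis card_2_iff card_mono)
qed

theorem lemma1:
  fixes n m :: nat
  assumes "n \<ge> 2" and "m \<ge> 2"
  shows "min n m + 2 \<le> gamma_2t (cart_prod (complete_graph n) (complete_graph m)) \<and>
         gamma_2t (cart_prod (complete_graph n) (complete_graph m)) \<le> 2 * min n m"
proof -
  let ?V = "{0..<n} \<times> {0..<m}"
  have gamma: "gamma_2t (cart_prod (complete_graph n) (complete_graph m))
      = total_2_dom_number ?V rook_adj"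
    by (simp add: gamma_2t_def cart_prod_complete_graph)
  have two_columns: "total_k_dominating 2 ?V rook_adj ({0..<n} \<times> {0, 1})"
    using assms by (intro rook_two_columns_total_2_dominating) auto
  have "total_k_dominating 2 ({0..<m} \<times> {0..<n}) rook_adj ({0..<m} \<times> {0, 1})"
    using assms by (intro rook_two_columns_total_2_dominating) auto
  then have two_rows: "total_k_dominating 2 ?V rook_adj (prod.swap ` ({0..<m} \<times> {0, 1}))"
    by (rule total_k_dominating_rook_swap)
  have upper: "total_2_dom_number ?V rook_adj \<le> 2 * min n m"
    using total_2_dom_number_le[OF two_columns] total_2_dom_number_le[OF two_rows]
    by (simp add: card_image card_cartesian_product min_def)
  obtain S where S: "total_k_dominating 2 ?V rook_adj S" "card S = total_2_dom_number ?V rook_adj"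
    using total_2_dom_number_attained[OF two_columns] by blast
  have "min n m + 2 \<le> card S"
    using rook_total_2_dominating_card_ge[OF _ _ _ _ S(1)] assms by simp
  with S(2) upper gamma show ?thesis
    by simp
qed

end
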